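(* Let $n\ge1$, $\gamma,\delta\in(0,1]$ and $c>0$. Set $j:=\lceil1/\gamma\rceil$, $\theta:=j-1/\gamma\in[0,1)$, and $$\omega_\star:=\delta^{\frac{1+\theta}{2(\theta+2/\gamma)}},\qquad R_\star:=\Big(\frac{\delta^{\frac{1+\theta}{2}}}{c^jc_{n,j}}\Big)^{\frac{1}{2j}},$$ where $c_{n,j}>0$ is a constant depending only on $n,j$ with the property stated in the context. Assume $\varphi:[0,R_\star]\to\mathbb{R}$ satisfies $$r^{1-n}(r^{n-1}\varphi')'=\frac{c\,\omega_\star}{\delta}\varphi^{1+\gamma}\ \text{ in }(0,R_\star),\qquad\varphi(0)=1,\qquad\varphi'(0)=0.$$ Then $(\omega_\star\delta)^{1/\gamma}\varphi(R_\star)\ge\delta$.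
   Context: Property of $c_{n,k}$ ($k=1,2,\dots$): for all $\lambda,R>0$, $\alpha>1$ and every nonnegative solution $\phi:[0,R]\to\mathbb{R}$ of $r^{1-n}(r^{n-1}\phi')'=\lambda\phi^\alpha$ in $(0,R)$, $\phi(0)=1$, $\phi'(0)=0$, one has $\phi(r)\ge c_{n,k}\lambda^kr^{2k}$ for all $r\in(0,R)$ (such constants, depending only on $n,k$, exist). Here $c_{n,j}$ is this constant with $k=j$. *)

theory Defs
  imports "HOL-Analysis.Analysis"
begin

text \<open>phi is a solution on [0,R] of  r^(1-n) (r^(n-1) phi')' = lam * phi^alpha  in (0,R),
  with phi(0) = 1, phi'(0) = 0.  phi is continuous on [0,R], differentiable on [0,R)
  (one-sided at 0) with derivative dphi, and r^(n-1) dphi(r) is differentiable on (0,R).\<close>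
definition radial_sol :: "nat \<Rightarrow> real \<Rightarrow> real \<Rightarrow> real \<Rightarrow> (real \<Rightarrow> real) \<Rightarrow> bool" where
  "radial_sol n lam alpha R phi \<longleftrightarrow>
     continuous_on {0..R} phi \<and> phi 0 = 1 \<and>
     (\<exists>dphi D.
        (\<forall>r\<in>{0..<R}. (phi has_real_derivative dphi r) (at r within {0..<R})) \<and>
        dphi 0 = 0 \<and>
        (\<forall>r\<in>{0<..<R}. ((\<lambda>s. s ^ (n - 1) * dphi s) has_real_derivative D r) (at r) \<and>
                         r powr (1 - real n) * D r = lam * phi r powr alpha))"

definition c_const_prop :: "nat \<Rightarrow> nat \<Rightarrow> real \<Rightarrow> bool" where
  "c_const_prop n k C \<longleftrightarrow>
     (\<forall>lam R alpha phi. lam > 0 \<longrightarrow> R > 0 \<longrightarrow> alpha > 1 \<longrightarrow>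
        radial_sol n lam alpha R phi \<longrightarrow> (\<forall>r\<in>{0..R}. phi r \<ge> 0) \<longrightarrow>
        (\<forall>r\<in>{0<..<R}. phi r \<ge> C * lam ^ k * r ^ (2 * k)))"

end

theory Submission
  imports Defs
begin

text \<open>On \<open>(0, R)\<close> the defining property of \<open>c_{n,j}\<close> gives \<open>\<phi>(r) \<ge> c_{n,j} \<lambda>^j r^{2j}\<close>
  with \<open>\<lambda> = c \<omega> / \<delta>\<close>, and by continuity this persists at \<open>r = R\<close>. The radius \<open>R\<close> is chosen so
  that the bound equals \<open>\<omega>^j \<delta>^{(1+\<theta>)/2 - j}\<close>. Multiplying by \<open>(\<omega> \<delta>)^{1/\<gamma>}\<close> raises the power
  of \<open>\<omega>\<close> to \<open>j + 1/\<gamma> = \<theta> + 2/\<gamma>\<close>, and \<open>\<omega>\<close> is precisely the number with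
  \<open>\<omega>^{\<theta> + 2/\<gamma>} = \<delta>^{(1+\<theta>)/2}\<close>; the exponents of \<open>\<delta>\<close> then add up to \<open>1\<close>.\<close>

lemma continuous_on_le_at_right_endpoint:
  fixes f g :: "real \<Rightarrow> real"
  assumes "a < b" "continuous_on {a..b} f" "continuous_on {a..b} g"
    and "\<And>x. x \<in> {a<..<b} \<Longrightarrow> g x \<le> f x"
  shows "g b \<le> f b"
proof -
  have "continuous_on (closure {a<..<b}) (\<lambda>x. g x - f x)"
    using assms(1-3) by (simp add: continuous_on_diff)
  moreover have "b \<in> closure {a<..<b}"
    using assms(1) by simp
  ultimately have "g b - f b \<le> 0"
    by (rule continuous_le_on_closure) (use assms(4) in auto)
  then show ?thesis by simp
qed

lemma c_const_prop_at_endpoint: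
  assumes "c_const_prop n k C" "lam > 0" "R > 0" "alpha > 1"
    and "radial_sol n lam alpha R phi" "\<forall>r\<in>{0..R}. phi r \<ge> 0"
  shows "phi R \<ge> C * lam ^ k * R ^ (2 * k)"
proof (rule continuous_on_le_at_right_endpoint[OF \<open>R > 0\<close>])
  show "continuous_on {0..R} phi"
    using assms(5) unfolding radial_sol_def by blast
  show "continuous_on {0..R} (\<lambda>r. C * lam ^ k * r ^ (2 * k))"
    by (intro continuous_intros)
  show "\<And>r. r \<in> {0<..<R} \<Longrightarrow> C * lam ^ k * r ^ (2 * k) \<le> phi r"
    using assms unfolding c_const_prop_def by blast
qed

lemma powr_inverse_power_cancel:
  fixes B :: real
  assumes "B > 0" "m > 0"
  shows "(B powr (1 / real m)) ^ m = B"
  using assms by (simp add: powr_realpow[symmetric] powr_powr)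

lemma omega_scaling_identity:
  fixes j :: nat and \<gamma> \<delta> c C \<theta> \<omega> :: real
  assumes "0 < \<gamma>" "0 < \<delta>" "c > 0" "C > 0"
    and \<theta>: "\<theta> = real j - 1 / \<gamma>"
    and \<omega>: "\<omega> = \<delta> powr ((1 + \<theta>) / (2 * (\<theta> + 2 / \<gamma>)))"
  shows "(\<omega> * \<delta>) powr (1 / \<gamma>) * (C * (c * \<omega> / \<delta>) ^ j * (\<delta> powr ((1 + \<theta>) / 2) / (c ^ j * C)))
           = \<delta>"
proof -
  have "\<omega> > 0" using \<omega> \<open>0 < \<delta>\<close> by simp
  have "\<theta> + 2 / \<gamma> > 0" using \<theta> \<open>0 < \<gamma>\<close> by (simp add: add_pos_nonneg)
  have \<omega>_power: "\<omega> powr (1 / \<gamma> + real j) = \<delta> powr ((1 + \<theta>) / 2)"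
  proof -
    have "1 / \<gamma> + real j = \<theta> + 2 / \<gamma>" using \<theta> by simp
    moreover have "(1 + \<theta>) / (2 * (\<theta> + 2 / \<gamma>)) * (\<theta> + 2 / \<gamma>) = (1 + \<theta>) / 2"
      using \<open>\<theta> + 2 / \<gamma> > 0\<close> by (simp add: field_simps)
    ultimately have "(1 + \<theta>) / (2 * (\<theta> + 2 / \<gamma>)) * (1 / \<gamma> + real j) = (1 + \<theta>) / 2"
      by simp
    then show ?thesis using \<omega> by (simp only: powr_powr)
  qed
  have "C * (c * \<omega> / \<delta>) ^ j * (\<delta> powr ((1 + \<theta>) / 2) / (c ^ j * C))
      = \<omega> powr real j * \<delta> powr ((1 + \<theta>) / 2 - real j)"
    using assms(2-4) \<open>\<omega> > 0\<close> by (simp add: power_divide power_mult_distrib powr_realpow powr_diff)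
  then have "(\<omega> * \<delta>) powr (1 / \<gamma>) * (C * (c * \<omega> / \<delta>) ^ j * (\<delta> powr ((1 + \<theta>) / 2) / (c ^ j * C)))
      = \<omega> powr (1 / \<gamma> + real j) * \<delta> powr (1 / \<gamma> + ((1 + \<theta>) / 2 - real j))"
    using \<open>\<omega> > 0\<close> \<open>0 < \<delta>\<close> by (simp add: powr_mult powr_add)
  also have "\<dots> = \<delta> powr ((1 + \<theta>) / 2 + (1 / \<gamma> + ((1 + \<theta>) / 2 - real j)))"
    unfolding \<omega>_power by (simp only: powr_add)
  also have "\<dots> = \<delta>"
    using \<theta> \<open>0 < \<delta>\<close> by simp
  finally show ?thesis .
qed

theorem lemma4p7:
  fixes n j :: nat and \<gamma> \<delta> c C \<theta> \<omega> R :: real and \<phi> :: "real \<Rightarrow> real"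
  assumes "n \<ge> 1"
    and "0 < \<gamma>" "\<gamma> \<le> 1" and "0 < \<delta>" "\<delta> \<le> 1" and "c > 0"
    and "j = nat \<lceil>1 / \<gamma>\<rceil>"
    and "\<theta> = real j - 1 / \<gamma>"
    and "\<omega> = \<delta> powr ((1 + \<theta>) / (2 * (\<theta> + 2 / \<gamma>)))"
    and "C > 0" and "c_const_prop n j C"
    and "R = (\<delta> powr ((1 + \<theta>) / 2) / (c ^ j * C)) powr (1 / (2 * real j))"
    and "radial_sol n (c * \<omega> / \<delta>) (1 + \<gamma>) R \<phi>"
    and "\<forall>r\<in>{0..R}. \<phi> r \<ge> 0"
  shows "(\<omega> * \<delta>) powr (1 / \<gamma>) * \<phi> R \<ge> \<delta>"
proof -
  define B where "B = \<delta> powr ((1 + \<theta>) / 2) / (c ^ j * C)"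
  have "j > 0" using assms(2,7) by simp
  have "B > 0" "\<omega> > 0" using assms(4,6,9,10) unfolding B_def by simp_all
  have "R > 0" using assms(12) \<open>B > 0\<close> unfolding B_def[symmetric] by simp
  have "\<phi> R \<ge> C * (c * \<omega> / \<delta>) ^ j * R ^ (2 * j)"
    using assms(2,4,6,11,13,14) \<open>R > 0\<close> \<open>\<omega> > 0\<close>
    by (intro c_const_prop_at_endpoint) auto
  also have "R ^ (2 * j) = B"
    using powr_inverse_power_cancel[of B "2 * j"] \<open>B > 0\<close> \<open>j > 0\<close>
    unfolding assms(12) B_def[symmetric] by simp
  finally have "(\<omega> * \<delta>) powr (1 / \<gamma>) * \<phi> R \<ge> (\<omega> * \<delta>) powr (1 / \<gamma>) * (C * (c * \<omega> / \<delta>) ^ j * B)"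
    by (simp add: mult_left_mono)
  also have "(\<omega> * \<delta>) powr (1 / \<gamma>) * (C * (c * \<omega> / \<delta>) ^ j * B) = \<delta>"
    unfolding B_def using assms(2,4,6,10,8,9) by (rule omega_scaling_identity)
  finally show ?thesis .
qed

end
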